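(* In the setting described in the context, for $\gamma_1,\gamma_2\ge0$ with $\gamma_1+\gamma_2=\gamma$, there is a positive constant $C_1=C_1(d,\lambda,\gamma_1,\gamma_2)$ such that for all $n\in\mathbb{N}_\infty$, $s\in[0,1]$ and $y,z\in\mathbb{R}^d$, $$\|\nabla g^n(\cdot,z)\|_{\infty,\gamma_1}\le C_1(1\wedge|z|^{\gamma_2})\qquad\text{and}\qquad|g^n_s(y,z)|\le\tfrac32|z|.$$ Moreover, for each $t\in[0,1]$, $y,z\in\mathbb{R}^d$ and $j=0,1$, $\lim_{n\to\infty}\nabla^j_yg^n_t(y,z)=\nabla^j_yg^\infty_t(y,z)$.
   Context: Setting. Let $\gamma\in(0,1)$, $\lambda\ge0$, $\mathbb{N}_\infty:=\mathbb{N}\cup\{\infty\}$. For each $n\in\mathbb{N}_\infty$ let $u^n:[0,1]\times\mathbb{R}^d\to\mathbb{R}^d$ be $C^1$ in $x$ with (a) $\|\nabla u^n_t\|_\infty+\sup_{x\ne x'}|\nabla u^n_t(x)-\nabla u^n_t(x')|/|x-x'|^\gamma\le\frac12$ for all $n\in\mathbb{N}_\infty$, $t\in[0,1]$; (b) for every $R>0$ and $j=0,1$, $\lim_{n\to\infty}\sup_{t\in[0,1]}\sup_{|x|\le R}|\nabla^ju^n_t(x)-\nabla^ju^\infty_t(x)|=0$. (In the paper these are the solutions of $\partial_tu^n+(\mathscr{L}_{\nu,\eta}-\lambda)u^n+b^n\cdot\nabla u^n+b^n=0$, $u^n_1=0$, along a subsequence, with $\lambda$ chosen large enough for (a).) Let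 $\Phi^n_t(x):=x+u^n_t(x)$, a $C^1$-diffeomorphism of $\mathbb{R}^d$ with inverse $(\Phi^n_t)^{-1}$, and define $$g^n_s(y,z):=\Phi^n_s\big((\Phi^n_s)^{-1}(y)+z\big)-y.$$ Notation: $[h]_\beta=\sup_{x\ne y}|h(x)-h(y)|/|x-y|^\beta$, $\|h\|_\beta=\|h\|_\infty+[h]_\beta$, and $\|\nabla g^n(\cdot,z)\|_{\infty,\gamma_1}:=\sup_{s\in[0,1]}\|\nabla_yg^n_s(\cdot,z)\|_{\gamma_1}$. *)

theory Defs
  imports "HOL-Analysis.Analysis" "HOL-Library.Extended_Nat"
begin

definition grad :: "('a::euclidean_space \<Rightarrow> 'a) \<Rightarrow> 'a \<Rightarrow> 'a \<Rightarrow> 'a" where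
  "grad f x = frechet_derivative f (at x)"

definition sup_op :: "('a::euclidean_space \<Rightarrow> 'a \<Rightarrow> 'a) \<Rightarrow> ereal" where
  "sup_op D = (SUP x. ereal (onorm (D x)))"

definition hoelder_op :: "('a::euclidean_space \<Rightarrow> 'a \<Rightarrow> 'a) \<Rightarrow> real \<Rightarrow> ereal" where
  "hoelder_op D \<beta> = (SUP p \<in> {p. fst p \<noteq> snd p}.
      ereal (onorm (\<lambda>v. D (fst p) v - D (snd p) v) / (dist (fst p) (snd p) powr \<beta>)))"

definition hnorm_op :: "('a::euclidean_space \<Rightarrow> 'a \<Rightarrow> 'a) \<Rightarrow> real \<Rightarrow> ereal" where
  "hnorm_op D \<beta> = sup_op D + hoelder_op D \<beta>"

text \<open>Mathematical power |z|^a with the convention 0^0 = 1.\<close>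
definition mpow :: "real \<Rightarrow> real \<Rightarrow> real" where
  "mpow x a = (if x = 0 then (if a = 0 then 1 else 0) else x powr a)"

text \<open>Standing assumptions (a) and (b) of the setting; index n ranges over N \<union> {\<infinity>} = enat.\<close>
definition setting :: "real \<Rightarrow> (enat \<Rightarrow> real \<Rightarrow> 'a::euclidean_space \<Rightarrow> 'a) \<Rightarrow> bool" where
  "setting \<gamma> u \<longleftrightarrow>
     (\<forall>n t x. t \<in> {0..1} \<longrightarrow> u n t differentiable (at x)) \<and>
     (\<forall>n t. t \<in> {0..1} \<longrightarrow> hnorm_op (grad (u n t)) \<gamma> \<le> ereal (1/2)) \<and>
     (\<forall>R>0. (\<lambda>k::nat. SUP t\<in>{0..1}. SUP x\<in>cball 0 R.
                 ereal (norm (u (enat k) t x - u \<infinity> t x))) \<longlonglongrightarrow> 0) \<and>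
     (\<forall>R>0. (\<lambda>k::nat. SUP t\<in>{0..1}. SUP x\<in>cball 0 R.
                 ereal (onorm (\<lambda>v. grad (u (enat k) t) x v - grad (u \<infinity> t) x v))) \<longlonglongrightarrow> 0)"

definition Phi :: "(enat \<Rightarrow> real \<Rightarrow> 'a::euclidean_space \<Rightarrow> 'a) \<Rightarrow> enat \<Rightarrow> real \<Rightarrow> 'a \<Rightarrow> 'a" where
  "Phi u n t x = x + u n t x"

definition gfun :: "(enat \<Rightarrow> real \<Rightarrow> 'a::euclidean_space \<Rightarrow> 'a) \<Rightarrow> enat \<Rightarrow> real \<Rightarrow> 'a \<Rightarrow> 'a \<Rightarrow> 'a" where
  "gfun u n s y z = Phi u n s (inv (Phi u n s) y + z) - y"

end

(*
  Write Phi = id + u with u 1/2-Lipschitz. By Banach's fixed point theorem Phi is a bijection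
  whose inverse is 2-Lipschitz, and g(y, z) = z + u(x + z) - u(x) for x = Phi^-1 y, so
  |g| <= 3/2 |z|. By the inverse function theorem
    Dg(y) = (Du(x + z) - Du(x)) o (I + Du(x))^-1,   ||(I + Du(x))^-1|| <= 2.
  The second difference Du(x + z) - Du(x) - Du(x' + z) + Du(x') is bounded by 2, by |x - x'|^gamma
  and by |z|^gamma; interpolating gives 2 min(1, |z|^gamma2) |x - x'|^gamma1, and |x - x'| is at
  most 2 |y - y'|. For the limits, |Phi_n^-1 y - Phi^-1 y| <= 2 |u_n(x) - u(x)|, and Du_n -> Du
  locally uniformly with Du continuous, so every ingredient of Dg converges.
*)
theory Submission
  imports Defs
begin

lemma min_one_powr_le_powr:
  fixes t \<alpha> \<beta> :: real
  assumes "0 < t" "0 \<le> \<beta>" "\<beta> \<le> \<alpha>"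
  shows "min 1 (t powr \<alpha>) \<le> t powr \<beta>"
proof (cases "t \<le> 1")
  case True
  then have "t powr \<alpha> \<le> t powr \<beta>"
    using assms by (intro powr_mono') auto
  then show ?thesis by linarith
next
  case False
  then have "1 \<le> t powr \<beta>"
    using assms by (intro ge_one_powr_ge_zero) auto
  then show ?thesis by linarith
qed

lemma min_one_powr_le_mpow:
  fixes t \<alpha> \<beta> :: real
  assumes "0 \<le> t" "0 \<le> \<beta>" "\<beta> \<le> \<alpha>"
  shows "min 1 (t powr \<alpha>) \<le> min 1 (mpow t \<beta>)"
  using min_one_powr_le_powr[of t \<beta> \<alpha>] assms by (auto simp: mpow_def)

lemma powr_interpolation_le:
  fixes b d t \<gamma>1 \<gamma>2 :: real
  assumes "0 < d" "0 \<le> t" "0 \<le> \<gamma>1" "0 \<le> \<gamma>2"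
    and "b \<le> 2" "b \<le> d powr (\<gamma>1 + \<gamma>2)" "b \<le> t powr (\<gamma>1 + \<gamma>2)"
  shows "b \<le> 2 * min 1 (mpow t \<gamma>2) * d powr \<gamma>1"
proof (cases "t = 0")
  case True
  then have "b \<le> 0" using assms by simp
  moreover have "0 \<le> min 1 (mpow t \<gamma>2)" by (simp add: mpow_def)
  ultimately show ?thesis by (simp add: order_trans[OF _ mult_nonneg_nonneg])
next
  case False
  with assms have "0 < t" by simp
  have "b \<le> 2 * min 1 (d powr (\<gamma>1 + \<gamma>2))"
    using assms powr_ge_zero[of d "\<gamma>1 + \<gamma>2"] by linarith
  also have "\<dots> \<le> 2 * d powr \<gamma>1"
    using min_one_powr_le_powr[of d \<gamma>1 "\<gamma>1 + \<gamma>2"] assms by simp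
  finally have far: "b \<le> 2 * d powr \<gamma>1" .
  define r where "r = min d t"
  have "0 < r" using \<open>0 < t\<close> assms by (simp add: r_def)
  have "b \<le> r powr (\<gamma>1 + \<gamma>2)"
    using assms by (simp add: r_def min_def)
  also have "\<dots> = r powr \<gamma>1 * r powr \<gamma>2"
    by (simp add: powr_add)
  also have "\<dots> \<le> d powr \<gamma>1 * t powr \<gamma>2"
    using \<open>0 < r\<close> assms by (intro mult_mono[OF powr_mono2 powr_mono2]) (auto simp: r_def)
  also have "\<dots> \<le> 2 * t powr \<gamma>2 * d powr \<gamma>1"
    by (simp add: algebra_simps)
  finally have near: "b \<le> 2 * t powr \<gamma>2 * d powr \<gamma>1" .
  show ?thesis
    using far near \<open>0 < t\<close> by (simp add: mpow_def min_def)
qed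

lemma onorm_diff_le:
  assumes "bounded_linear f" "bounded_linear g"
  shows "onorm (\<lambda>x. f x - g x) \<le> onorm f + onorm g"
  using onorm_triangle[OF assms(1) bounded_linear_minus[OF assms(2)]]
  by (simp add: onorm_neg)

lemma lipschitz_on_bounded_linear:
  assumes "bounded_linear L" "onorm L \<le> C"
  shows "C-lipschitz_on U L"
proof (rule lipschitz_onI)
  fix x y
  have "dist (L x) (L y) = norm (L (x - y))"
    using assms(1) by (simp add: dist_norm linear_diff bounded_linear.linear)
  also have "\<dots> \<le> C * dist x y"
    using onorm[OF assms(1), of "x - y"] assms(2)
    by (simp add: dist_norm order_trans[OF _ mult_right_mono])
  finally show "dist (L x) (L y) \<le> C * dist x y" .
  show "0 \<le> C" using onorm_pos_le[OF assms(1)] assms(2) by linarith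
qed

section \<open>Lipschitz perturbations of the identity\<close>

definition id_plus :: "('a::real_vector \<Rightarrow> 'a) \<Rightarrow> 'a \<Rightarrow> 'a" where
  "id_plus f x = x + f x"

lemma dist_le_dist_id_plus:
  fixes f :: "'a::real_normed_vector \<Rightarrow> 'a"
  assumes "(1/2)-lipschitz_on UNIV f"
  shows "dist x y \<le> 2 * dist (id_plus f x) (id_plus f y)"
proof -
  have "x - y = (id_plus f x - id_plus f y) - (f x - f y)"
    by (simp add: id_plus_def)
  then have "dist x y \<le> dist (id_plus f x) (id_plus f y) + dist (f x) (f y)"
    by (metis dist_norm norm_triangle_ineq4)
  moreover have "dist (f x) (f y) \<le> 1/2 * dist x y"
    using lipschitz_onD[OF assms] by simp
  ultimately show ?thesis by linarith
qed

lemma bij_id_plus: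
  fixes f :: "'a::banach \<Rightarrow> 'a"
  assumes f: "(1/2)-lipschitz_on UNIV f"
  shows "bij (id_plus f)"
proof (rule bijI)
  show "inj (id_plus f)"
  proof (rule injI)
    fix x y assume "id_plus f x = id_plus f y"
    then show "x = y" using dist_le_dist_id_plus[OF f, of x y] by simp
  qed
  have "\<exists>x. id_plus f x = y" for y
  proof -
    have "\<exists>!x. y - f x = x"
      by (rule banach_fix_type[of "1/2"])
         (use lipschitz_onD[OF f] in \<open>auto simp: dist_norm norm_minus_commute\<close>)
    then show ?thesis by (auto simp: id_plus_def algebra_simps)
  qed
  then show "surj (id_plus f)" by (metis surjI)
qed

lemma id_plus_inv:
  fixes f :: "'a::banach \<Rightarrow> 'a"
  assumes "(1/2)-lipschitz_on UNIV f"
  shows "id_plus f (inv (id_plus f) y) = y"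
  using bij_id_plus[OF assms] by (simp add: bij_is_surj surj_f_inv_f)

lemma inv_id_plus:
  fixes f :: "'a::banach \<Rightarrow> 'a"
  assumes "(1/2)-lipschitz_on UNIV f"
  shows "inv (id_plus f) (id_plus f x) = x"
  using bij_id_plus[OF assms] by (simp add: bij_is_inj)

lemma lipschitz_inv_id_plus:
  fixes f :: "'a::banach \<Rightarrow> 'a"
  assumes "(1/2)-lipschitz_on UNIV f"
  shows "2-lipschitz_on UNIV (inv (id_plus f))"
proof (rule lipschitz_onI)
  fix y y'
  show "dist (inv (id_plus f) y) (inv (id_plus f) y') \<le> 2 * dist y y'"
    using dist_le_dist_id_plus[OF assms, of "inv (id_plus f) y" "inv (id_plus f) y'"]
    by (simp add: id_plus_inv[OF assms])
qed simp

definition conj_shift :: "('a::real_vector \<Rightarrow> 'a) \<Rightarrow> 'a \<Rightarrow> 'a \<Rightarrow> 'a" where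
  "conj_shift f z y = id_plus f (inv (id_plus f) y + z) - y"

lemma norm_conj_shift_le:
  fixes f :: "'a::banach \<Rightarrow> 'a"
  assumes "(1/2)-lipschitz_on UNIV f"
  shows "norm (conj_shift f z y) \<le> 3/2 * norm z"
proof -
  let ?x = "inv (id_plus f) y"
  have "conj_shift f z y = id_plus f (?x + z) - id_plus f ?x"
    by (simp add: conj_shift_def id_plus_inv[OF assms])
  also have "\<dots> = z + (f (?x + z) - f ?x)"
    by (simp add: id_plus_def)
  finally have "norm (conj_shift f z y) \<le> norm z + norm (f (?x + z) - f ?x)"
    by (simp add: norm_triangle_ineq)
  also have "norm (f (?x + z) - f ?x) \<le> 1/2 * norm z"
    using lipschitz_onD[OF assms, of "?x + z" ?x] by (simp add: dist_norm)
  finally show ?thesis by simp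
qed

lemma bij_linear_imp_inv_linear:
  fixes f :: "'a::real_vector \<Rightarrow> 'b::real_vector"
  assumes "linear f" "bij f"
  shows "linear (inv f)"
  using assms
  by (metis bij_betw_def inv_unique_comp left_right_inverse_eq
      linear_injective_left_inverse linear_surjective_right_inverse)

lemma linear_inv_id_plus:
  fixes L :: "'a::banach \<Rightarrow> 'a"
  assumes "bounded_linear L" "onorm L \<le> 1/2"
  shows "linear (inv (id_plus L))"
proof -
  have "linear (id_plus L)"
    using bounded_linear_add[OF bounded_linear_ident assms(1)]
    by (simp add: id_plus_def[abs_def] bounded_linear.linear)
  then show ?thesis
    using bij_id_plus[OF lipschitz_on_bounded_linear[OF assms]] by (rule bij_linear_imp_inv_linear)
qed

lemma norm_inv_id_plus_le:
  fixes L :: "'a::banach \<Rightarrow> 'a"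
  assumes "bounded_linear L" "onorm L \<le> 1/2"
  shows "norm (inv (id_plus L) v) \<le> 2 * norm v"
  using lipschitz_onD[OF lipschitz_inv_id_plus[OF lipschitz_on_bounded_linear[OF assms]], of v 0]
    linear_0[OF linear_inv_id_plus[OF assms]]
  by simp

lemma bounded_linear_inv_id_plus:
  fixes L :: "'a::banach \<Rightarrow> 'a"
  assumes "bounded_linear L" "onorm L \<le> 1/2"
  shows "bounded_linear (inv (id_plus L))"
  using linear_inv_id_plus[OF assms] norm_inv_id_plus_le[OF assms]
  by (intro bounded_linear_intro[where K=2]) (auto simp: linear_add linear_scale mult.commute)

lemma onorm_inv_id_plus_le:
  fixes L :: "'a::banach \<Rightarrow> 'a"
  assumes "bounded_linear L" "onorm L \<le> 1/2"
  shows "onorm (inv (id_plus L)) \<le> 2"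
  using norm_inv_id_plus_le[OF assms] by (intro onorm_bound) auto

lemma onorm_inv_id_plus_diff_le:
  fixes L1 L2 :: "'a::banach \<Rightarrow> 'a"
  assumes L1: "bounded_linear L1" "onorm L1 \<le> 1/2"
    and L2: "bounded_linear L2" "onorm L2 \<le> 1/2"
  shows "onorm (\<lambda>v. inv (id_plus L1) v - inv (id_plus L2) v) \<le> 4 * onorm (\<lambda>v. L1 v - L2 v)"
proof (rule onorm_bound)
  have bl: "bounded_linear (\<lambda>v. L1 v - L2 v)"
    by (rule bounded_linear_sub[OF L1(1) L2(1)])
  then show "0 \<le> 4 * onorm (\<lambda>v. L1 v - L2 v)"
    by (simp add: onorm_pos_le)
  fix v
  define a w where "a = inv (id_plus L1) v" and "w = inv (id_plus L2) v"
  have "id_plus L1 a - id_plus L1 w = L2 w - L1 w"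
    using id_plus_inv[OF lipschitz_on_bounded_linear[OF L1], of v]
      id_plus_inv[OF lipschitz_on_bounded_linear[OF L2], of v]
    by (simp add: a_def w_def id_plus_def algebra_simps)
  then have "norm (a - w) \<le> 2 * norm (L1 w - L2 w)"
    using dist_le_dist_id_plus[OF lipschitz_on_bounded_linear[OF L1], of a w]
    by (simp add: dist_norm norm_minus_commute)
  also have "\<dots> \<le> 2 * (onorm (\<lambda>v. L1 v - L2 v) * norm w)"
    using onorm[OF bl, of w] by simp
  also have "\<dots> \<le> 2 * (onorm (\<lambda>v. L1 v - L2 v) * (2 * norm v))"
    using norm_inv_id_plus_le[OF L2, of v] onorm_pos_le[OF bl]
    by (intro mult_left_mono) (simp_all add: w_def)
  finally show "norm (inv (id_plus L1) v - inv (id_plus L2) v) \<le> 4 * onorm (\<lambda>v. L1 v - L2 v) * norm v"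
    by (simp add: a_def w_def)
qed

definition conj_shift_op :: "('a::real_vector \<Rightarrow> 'a) \<Rightarrow> ('a \<Rightarrow> 'a) \<Rightarrow> 'a \<Rightarrow> 'a" where
  "conj_shift_op P Q = (\<lambda>v. P v - Q v) \<circ> inv (id_plus Q)"

lemma bounded_linear_conj_shift_op:
  fixes P Q :: "'a::banach \<Rightarrow> 'a"
  assumes "bounded_linear P" "bounded_linear Q" "onorm Q \<le> 1/2"
  shows "bounded_linear (conj_shift_op P Q)"
  unfolding conj_shift_op_def
  using bounded_linear_compose[OF bounded_linear_sub[OF assms(1,2)] bounded_linear_inv_id_plus[OF assms(2,3)]]
  by (simp add: o_def)

lemma onorm_conj_shift_op_le:
  fixes P Q :: "'a::banach \<Rightarrow> 'a"
  assumes "bounded_linear P" "bounded_linear Q" "onorm Q \<le> 1/2"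
  shows "onorm (conj_shift_op P Q) \<le> 2 * onorm (\<lambda>v. P v - Q v)"
proof -
  have bl: "bounded_linear (\<lambda>v. P v - Q v)"
    by (rule bounded_linear_sub[OF assms(1,2)])
  have "onorm (conj_shift_op P Q) \<le> onorm (\<lambda>v. P v - Q v) * onorm (inv (id_plus Q))"
    unfolding conj_shift_op_def by (intro onorm_compose bl bounded_linear_inv_id_plus assms(2,3))
  also have "\<dots> \<le> onorm (\<lambda>v. P v - Q v) * 2"
    by (intro mult_left_mono onorm_inv_id_plus_le onorm_pos_le bl assms(2,3))
  finally show ?thesis by simp
qed

lemma onorm_conj_shift_op_diff_le:
  fixes P1 Q1 P2 Q2 :: "'a::banach \<Rightarrow> 'a"
  assumes P1: "bounded_linear P1" and Q1: "bounded_linear Q1" "onorm Q1 \<le> 1/2"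
    and P2: "bounded_linear P2" and Q2: "bounded_linear Q2" "onorm Q2 \<le> 1/2"
  shows "onorm (\<lambda>v. conj_shift_op P1 Q1 v - conj_shift_op P2 Q2 v)
    \<le> 2 * onorm (\<lambda>v. (P1 v - Q1 v) - (P2 v - Q2 v))
      + 4 * onorm (\<lambda>v. P2 v - Q2 v) * onorm (\<lambda>v. Q1 v - Q2 v)"
proof -
  define A where "A v = (P1 v - Q1 v) - (P2 v - Q2 v)" for v
  define B where "B v = P2 v - Q2 v" for v
  define M where "M v = inv (id_plus Q1) v - inv (id_plus Q2) v" for v
  have A: "bounded_linear A"
    unfolding A_def by (intro bounded_linear_sub P1 P2 Q1 Q2)
  have B: "bounded_linear B"
    unfolding B_def by (intro bounded_linear_sub P2 Q2)
  have M: "bounded_linear M"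
    unfolding M_def by (intro bounded_linear_sub bounded_linear_inv_id_plus Q1 Q2)
  have AM1: "bounded_linear (A \<circ> inv (id_plus Q1))"
    by (rule bounded_linear_compose[OF A bounded_linear_inv_id_plus[OF Q1], folded o_def])
  have BM: "bounded_linear (B \<circ> M)"
    by (rule bounded_linear_compose[OF B M, folded o_def])
  have "conj_shift_op P1 Q1 v - conj_shift_op P2 Q2 v = (A \<circ> inv (id_plus Q1)) v + (B \<circ> M) v" for v
    using linear_diff[OF bounded_linear.linear[OF B]]
    by (simp add: conj_shift_op_def A_def M_def) (simp add: B_def)
  then have "onorm (\<lambda>v. conj_shift_op P1 Q1 v - conj_shift_op P2 Q2 v)
      \<le> onorm (A \<circ> inv (id_plus Q1)) + onorm (B \<circ> M)"
    using onorm_triangle[OF AM1 BM] by simp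
  also have "\<dots> \<le> onorm A * onorm (inv (id_plus Q1)) + onorm B * onorm M"
    using onorm_compose[OF A bounded_linear_inv_id_plus[OF Q1]] onorm_compose[OF B M]
    by (rule add_mono)
  also have "\<dots> \<le> onorm A * 2 + onorm B * (4 * onorm (\<lambda>v. Q1 v - Q2 v))"
    using onorm_inv_id_plus_le[OF Q1] onorm_inv_id_plus_diff_le[OF Q1 Q2]
      onorm_pos_le[OF A] onorm_pos_le[OF B]
    unfolding M_def by (intro add_mono mult_left_mono)
  finally show ?thesis by (simp add: A_def[abs_def] B_def[abs_def] mult_ac)
qed

definition conj_shift_deriv ::
    "('a::real_vector \<Rightarrow> 'a) \<Rightarrow> ('a \<Rightarrow> 'a \<Rightarrow> 'a) \<Rightarrow> 'a \<Rightarrow> 'a \<Rightarrow> 'a \<Rightarrow> 'a" where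
  "conj_shift_deriv f D z y = conj_shift_op (D (inv (id_plus f) y + z)) (D (inv (id_plus f) y))"

section \<open>Differentiable perturbations and Hoelder estimates\<close>

locale half_contraction =
  fixes f :: "'a::banach \<Rightarrow> 'a" and D :: "'a \<Rightarrow> 'a \<Rightarrow> 'a"
  assumes has_derivative: "(f has_derivative D x) (at x)"
    and onorm_deriv_le: "onorm (D x) \<le> 1/2"
begin

lemma bounded_linear_deriv: "bounded_linear (D x)"
  using has_derivative has_derivative_bounded_linear by blast

lemma lipschitz_deriv: "(1/2)-lipschitz_on UNIV (D x)"
  by (rule lipschitz_on_bounded_linear[OF bounded_linear_deriv onorm_deriv_le])

lemma lipschitz: "(1/2)-lipschitz_on UNIV f"
proof (rule lipschitz_onI)
  fix x y
  show "dist (f x) (f y) \<le> 1/2 * dist x y"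
    using differentiable_bound[OF convex_UNIV, of f D "1/2" x y] has_derivative onorm_deriv_le
    by (auto simp: dist_norm intro: has_derivative_at_withinI)
qed simp

lemma onorm_deriv_diff_nonneg: "0 \<le> onorm (\<lambda>v. D x v - D x' v)"
  by (intro onorm_pos_le bounded_linear_sub bounded_linear_deriv)

lemma onorm_deriv_diff_le: "onorm (\<lambda>v. D x v - D x' v) \<le> 1"
  using onorm_diff_le[OF bounded_linear_deriv bounded_linear_deriv, of x x']
    onorm_deriv_le[of x] onorm_deriv_le[of x']
  by linarith

lemma has_derivative_id_plus: "(id_plus f has_derivative id_plus (D x)) (at x)"
  using has_derivative_add[OF has_derivative_ident has_derivative[of x]]
  by (simp add: id_plus_def[abs_def])

lemma has_derivative_inv_id_plus:
  "(inv (id_plus f) has_derivative inv (id_plus (D (inv (id_plus f) y)))) (at y)"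
proof (rule has_derivative_inverse_basic[where f = "id_plus f" and T = UNIV])
  let ?x = "inv (id_plus f) y"
  show "(id_plus f has_derivative id_plus (D ?x)) (at ?x)"
    by (rule has_derivative_id_plus)
  show "bounded_linear (inv (id_plus (D ?x)))"
    by (rule bounded_linear_inv_id_plus[OF bounded_linear_deriv onorm_deriv_le])
  show "inv (id_plus (D ?x)) \<circ> id_plus (D ?x) = id"
    using inv_id_plus[OF lipschitz_deriv] by (simp add: fun_eq_iff)
  show "continuous (at y) (inv (id_plus f))"
    using lipschitz_on_continuous_on[OF lipschitz_inv_id_plus[OF lipschitz]]
    by (simp add: continuous_on_eq_continuous_at)
qed (auto simp: id_plus_inv[OF lipschitz])

lemma has_derivative_conj_shift: "(conj_shift f z has_derivative conj_shift_deriv f D z y) (at y)"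
proof -
  let ?x = "inv (id_plus f) y"
  let ?M = "inv (id_plus (D ?x))"
  have "((\<lambda>y. id_plus f (inv (id_plus f) y + z) - y)
      has_derivative (\<lambda>v. id_plus (D (?x + z)) (?M v) - v)) (at y)"
    by (intro has_derivative_diff has_derivative_ident
        has_derivative_compose[OF has_derivative_add_const[OF has_derivative_inv_id_plus]
          has_derivative_id_plus])
  moreover have "id_plus (D (?x + z)) (?M v) - v = conj_shift_deriv f D z y v" for v
  proof -
    have "id_plus (D (?x + z)) (?M v) - v = id_plus (D (?x + z)) (?M v) - id_plus (D ?x) (?M v)"
      by (simp add: id_plus_inv[OF lipschitz_deriv])
    also have "\<dots> = conj_shift_deriv f D z y v"
      by (simp add: conj_shift_deriv_def conj_shift_op_def id_plus_def)
    finally show ?thesis .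
  qed
  ultimately show ?thesis
    by (simp add: conj_shift_def[abs_def] fun_eq_iff)
qed

end

locale holder_half_contraction = half_contraction +
  fixes \<gamma> :: real
  assumes onorm_deriv_diff_holder: "onorm (\<lambda>v. D x v - D x' v) \<le> 1/2 * dist x x' powr \<gamma>"
begin

lemma onorm_deriv_shift_le:
  assumes "0 \<le> \<gamma>2" "\<gamma>2 \<le> \<gamma>"
  shows "onorm (\<lambda>v. D (x + z) v - D x v) \<le> min 1 (mpow (norm z) \<gamma>2)"
proof -
  have "onorm (\<lambda>v. D (x + z) v - D x v) \<le> min 1 (norm z powr \<gamma>)"
    using onorm_deriv_diff_le[of "x + z" x] onorm_deriv_diff_holder[of "x + z" x]
      onorm_deriv_diff_nonneg[of "x + z" x]
    by (simp add: dist_norm)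
  also have "\<dots> \<le> min 1 (mpow (norm z) \<gamma>2)"
    by (rule min_one_powr_le_mpow) (use assms in auto)
  finally show ?thesis .
qed

lemma onorm_deriv_diff_le_powr:
  assumes "0 \<le> \<gamma>1" "\<gamma>1 \<le> \<gamma>"
  shows "onorm (\<lambda>v. D x v - D x' v) \<le> dist x x' powr \<gamma>1"
proof (cases "x = x'")
  case True
  then show ?thesis by (simp add: onorm_zero)
next
  case False
  have "onorm (\<lambda>v. D x v - D x' v) \<le> min 1 (dist x x' powr \<gamma>)"
    using onorm_deriv_diff_le[of x x'] onorm_deriv_diff_holder[of x x']
      onorm_deriv_diff_nonneg[of x x']
    by simp
  also have "\<dots> \<le> dist x x' powr \<gamma>1"
    by (rule min_one_powr_le_powr) (use False assms in auto)
  finally show ?thesis .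
qed

lemma onorm_deriv_shift_diff_le:
  assumes "0 \<le> \<gamma>1" "0 \<le> \<gamma>2" "\<gamma>1 + \<gamma>2 = \<gamma>"
  shows "onorm (\<lambda>v. (D (x + z) v - D x v) - (D (x' + z) v - D x' v))
    \<le> 2 * min 1 (mpow (norm z) \<gamma>2) * dist x x' powr \<gamma>1"
proof (cases "x = x'")
  case True
  then show ?thesis by (simp add: onorm_zero)
next
  case False
  let ?b = "onorm (\<lambda>v. (D (x + z) v - D x v) - (D (x' + z) v - D x' v))"
  have bl: "bounded_linear (\<lambda>v. D p v - D q v)" for p q
    by (intro bounded_linear_sub bounded_linear_deriv)
  have "?b \<le> onorm (\<lambda>v. D (x + z) v - D x v) + onorm (\<lambda>v. D (x' + z) v - D x' v)"
    by (rule onorm_diff_le[OF bl bl])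
  then have small: "?b \<le> 2" "?b \<le> norm z powr \<gamma>"
    using onorm_deriv_diff_le[of "x + z" x] onorm_deriv_diff_le[of "x' + z" x']
      onorm_deriv_diff_holder[of "x + z" x] onorm_deriv_diff_holder[of "x' + z" x']
    by (simp_all add: dist_norm)
  have "?b = onorm (\<lambda>v. (D (x + z) v - D (x' + z) v) - (D x v - D x' v))"
    by (simp add: algebra_simps)
  also have "\<dots> \<le> onorm (\<lambda>v. D (x + z) v - D (x' + z) v) + onorm (\<lambda>v. D x v - D x' v)"
    by (rule onorm_diff_le[OF bl bl])
  finally have near: "?b \<le> dist x x' powr \<gamma>"
    using onorm_deriv_diff_holder[of "x + z" "x' + z"] onorm_deriv_diff_holder[of x x']
    by (simp add: dist_norm)
  show ?thesis
    using powr_interpolation_le[of "dist x x'" "norm z" \<gamma>1 \<gamma>2 ?b] small near False assms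
    by simp
qed

lemma onorm_conj_shift_deriv_le:
  assumes "0 \<le> \<gamma>2" "\<gamma>2 \<le> \<gamma>"
  shows "onorm (conj_shift_deriv f D z y) \<le> 2 * min 1 (mpow (norm z) \<gamma>2)"
  unfolding conj_shift_deriv_def
  using onorm_conj_shift_op_le[OF bounded_linear_deriv bounded_linear_deriv onorm_deriv_le,
      of "inv (id_plus f) y + z" "inv (id_plus f) y"]
    onorm_deriv_shift_le[OF assms, of "inv (id_plus f) y" z]
  by linarith

lemma onorm_conj_shift_deriv_diff_le:
  assumes "0 \<le> \<gamma>1" "\<gamma>1 \<le> 1" "0 \<le> \<gamma>2" "\<gamma>1 + \<gamma>2 = \<gamma>"
  shows "onorm (\<lambda>v. conj_shift_deriv f D z y v - conj_shift_deriv f D z y' v)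
    \<le> 16 * min 1 (mpow (norm z) \<gamma>2) * dist y y' powr \<gamma>1"
proof -
  define m where "m = min 1 (mpow (norm z) \<gamma>2)"
  define x x' where "x = inv (id_plus f) y" and "x' = inv (id_plus f) y'"
  have "0 \<le> m" by (simp add: m_def mpow_def)
  have "\<gamma>1 \<le> \<gamma>" "\<gamma>2 \<le> \<gamma>" using assms by linarith+
  have "dist x x' powr \<gamma>1 \<le> (2 * dist y y') powr \<gamma>1"
    using lipschitz_onD[OF lipschitz_inv_id_plus[OF lipschitz], of y y'] assms(1)
    by (simp add: x_def x'_def powr_mono2)
  also have "\<dots> \<le> 2 * dist y y' powr \<gamma>1"
    using powr_mono[of \<gamma>1 1 2] assms(2) by (simp add: powr_mult mult_right_mono)
  finally have dist_powr: "dist x x' powr \<gamma>1 \<le> 2 * dist y y' powr \<gamma>1" .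
  have "onorm (\<lambda>v. conj_shift_deriv f D z y v - conj_shift_deriv f D z y' v)
      \<le> 2 * onorm (\<lambda>v. (D (x + z) v - D x v) - (D (x' + z) v - D x' v))
        + 4 * onorm (\<lambda>v. D (x' + z) v - D x' v) * onorm (\<lambda>v. D x v - D x' v)"
    unfolding conj_shift_deriv_def x_def[symmetric] x'_def[symmetric]
    by (intro onorm_conj_shift_op_diff_le bounded_linear_deriv onorm_deriv_le)
  also have "\<dots> \<le> 2 * (2 * m * dist x x' powr \<gamma>1) + 4 * m * dist x x' powr \<gamma>1"
    using onorm_deriv_shift_diff_le[OF assms(1,3,4), of x z x']
      onorm_deriv_shift_le[OF assms(3) \<open>\<gamma>2 \<le> \<gamma>\<close>, of x' z]
      onorm_deriv_diff_le_powr[OF assms(1) \<open>\<gamma>1 \<le> \<gamma>\<close>, of x x']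
      onorm_deriv_diff_nonneg \<open>0 \<le> m\<close>
    unfolding m_def[symmetric]
    by (intro add_mono mult_left_mono mult_mono) auto
  also have "\<dots> \<le> 16 * m * dist y y' powr \<gamma>1"
    using mult_left_mono[OF dist_powr, of "8 * m"] \<open>0 \<le> m\<close> by simp
  finally show ?thesis by (simp add: m_def)
qed

end

section \<open>Convergence\<close>

lemma tendsto_equi_lipschitz:
  fixes fk :: "nat \<Rightarrow> 'a::metric_space \<Rightarrow> 'b::metric_space"
  assumes lip: "\<And>k. L-lipschitz_on UNIV (fk k)"
    and lim: "\<And>x. (\<lambda>k. fk k x) \<longlonglongrightarrow> f x" and "pk \<longlonglongrightarrow> p"
  shows "(\<lambda>k. fk k (pk k)) \<longlonglongrightarrow> f p"
proof -
  have bound: "dist (fk k (pk k)) (f p) \<le> L * dist (pk k) p + dist (fk k p) (f p)" for k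
    using dist_triangle[of "fk k (pk k)" "f p" "fk k p"] lipschitz_onD[OF lip, of "pk k" p k]
    by simp
  have lim0: "(\<lambda>k. L * dist (pk k) p + dist (fk k p) (f p)) \<longlonglongrightarrow> 0"
    using \<open>pk \<longlonglongrightarrow> p\<close> lim[of p]
    by (intro tendsto_add_zero tendsto_mult_right_zero) (simp_all add: tendsto_dist_iff[symmetric])
  show ?thesis
    unfolding tendsto_dist_iff[of _ "f p"]
    by (rule Lim_null_comparison[OF always_eventually lim0]) (simp add: bound)
qed

lemma tendsto_inv_id_plus:
  fixes fk :: "nat \<Rightarrow> 'a::banach \<Rightarrow> 'a"
  assumes lipk: "\<And>k. (1/2)-lipschitz_on UNIV (fk k)" and lip: "(1/2)-lipschitz_on UNIV f"
    and lim: "\<And>x. (\<lambda>k. fk k x) \<longlonglongrightarrow> f x"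
  shows "(\<lambda>k. inv (id_plus (fk k)) y) \<longlonglongrightarrow> inv (id_plus f) y"
proof -
  let ?x = "inv (id_plus f) y"
  have bound: "dist (inv (id_plus (fk k)) y) ?x \<le> 2 * dist (fk k ?x) (f ?x)" for k
  proof -
    have "dist (inv (id_plus (fk k)) y) ?x
        \<le> 2 * dist (id_plus (fk k) (inv (id_plus (fk k)) y)) (id_plus (fk k) ?x)"
      by (rule dist_le_dist_id_plus[OF lipk])
    also have "id_plus (fk k) (inv (id_plus (fk k)) y) = id_plus f ?x"
      by (simp add: id_plus_inv[OF lipk] id_plus_inv[OF lip])
    also have "dist (id_plus f ?x) (id_plus (fk k) ?x) = dist (fk k ?x) (f ?x)"
      by (simp add: id_plus_def dist_norm norm_minus_commute)
    finally show ?thesis .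
  qed
  have lim0: "(\<lambda>k. 2 * dist (fk k ?x) (f ?x)) \<longlonglongrightarrow> 0"
    using lim[of ?x] by (intro tendsto_mult_right_zero) (simp add: tendsto_dist_iff[symmetric])
  show ?thesis
    unfolding tendsto_dist_iff[of _ ?x]
    by (rule Lim_null_comparison[OF always_eventually lim0]) (simp add: bound)
qed

lemma tendsto_conj_shift:
  fixes fk :: "nat \<Rightarrow> 'a::banach \<Rightarrow> 'a"
  assumes "\<And>k. (1/2)-lipschitz_on UNIV (fk k)" "(1/2)-lipschitz_on UNIV f"
    and "\<And>x. (\<lambda>k. fk k x) \<longlonglongrightarrow> f x"
  shows "(\<lambda>k. conj_shift (fk k) z y) \<longlonglongrightarrow> conj_shift f z y"
proof -
  have x: "(\<lambda>k. inv (id_plus (fk k)) y + z) \<longlonglongrightarrow> inv (id_plus f) y + z"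
    by (intro tendsto_add tendsto_const tendsto_inv_id_plus assms)
  have "(\<lambda>k. (inv (id_plus (fk k)) y + z) + fk k (inv (id_plus (fk k)) y + z) - y)
      \<longlonglongrightarrow> (inv (id_plus f) y + z) + f (inv (id_plus f) y + z) - y"
    by (intro tendsto_intros x tendsto_equi_lipschitz[OF assms(1,3) x])
  then show ?thesis
    by (simp add: conj_shift_def id_plus_def)
qed

lemma tendsto_onorm_conj_shift_op:
  fixes Pk Qk :: "nat \<Rightarrow> 'a::banach \<Rightarrow> 'a"
  assumes Pk: "\<And>k. bounded_linear (Pk k)" and Qk: "\<And>k. bounded_linear (Qk k)" "\<And>k. onorm (Qk k) \<le> 1/2"
    and P: "bounded_linear P" and Q: "bounded_linear Q" "onorm Q \<le> 1/2"
    and limP: "(\<lambda>k. onorm (\<lambda>v. Pk k v - P v)) \<longlonglongrightarrow> 0"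
    and limQ: "(\<lambda>k. onorm (\<lambda>v. Qk k v - Q v)) \<longlonglongrightarrow> 0"
  shows "(\<lambda>k. onorm (\<lambda>v. conj_shift_op (Pk k) (Qk k) v - conj_shift_op P Q v)) \<longlonglongrightarrow> 0"
proof (rule Lim_null_comparison[OF always_eventually])
  let ?a = "\<lambda>k. onorm (\<lambda>v. Pk k v - P v)" and ?b = "\<lambda>k. onorm (\<lambda>v. Qk k v - Q v)"
    and ?e = "\<lambda>k. onorm (\<lambda>v. conj_shift_op (Pk k) (Qk k) v - conj_shift_op P Q v)"
    and ?c = "onorm (\<lambda>v. P v - Q v)"
  have bl: "bounded_linear (\<lambda>v. A v - B v)" if "bounded_linear A" "bounded_linear B" for A B
    using that by (rule bounded_linear_sub)
  show "(\<lambda>k. 2 * (?a k + ?b k) + 4 * ?c * ?b k) \<longlonglongrightarrow> 0"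
    by (intro tendsto_add_zero tendsto_mult_right_zero limP limQ)
  show "\<forall>k. norm (?e k) \<le> 2 * (?a k + ?b k) + 4 * ?c * ?b k"
  proof
    fix k
    have "onorm (\<lambda>v. (Pk k v - Qk k v) - (P v - Q v))
        = onorm (\<lambda>v. (Pk k v - P v) - (Qk k v - Q v))"
      by (simp add: algebra_simps)
    also have "\<dots> \<le> ?a k + ?b k"
      by (intro onorm_diff_le bl Pk Qk P Q)
    finally have diff: "onorm (\<lambda>v. (Pk k v - Qk k v) - (P v - Q v)) \<le> ?a k + ?b k" .
    have "?e k \<le> 2 * onorm (\<lambda>v. (Pk k v - Qk k v) - (P v - Q v)) + 4 * ?c * ?b k"
      by (rule onorm_conj_shift_op_diff_le[OF Pk Qk(1,2) P Q])
    also have "\<dots> \<le> 2 * (?a k + ?b k) + 4 * ?c * ?b k"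
      using diff by simp
    finally have "?e k \<le> 2 * (?a k + ?b k) + 4 * ?c * ?b k" .
    moreover have "0 \<le> ?e k"
      by (intro onorm_pos_le bl bounded_linear_conj_shift_op Pk Qk P Q)
    ultimately show "norm (?e k) \<le> 2 * (?a k + ?b k) + 4 * ?c * ?b k"
      by simp
  qed
qed

lemma tendsto_onorm_locally_uniform:
  fixes Dk :: "nat \<Rightarrow> 'a::real_normed_vector \<Rightarrow> 'b::real_normed_vector \<Rightarrow> 'c::real_normed_vector"
  assumes Dk: "\<And>k x. bounded_linear (Dk k x)" and D: "\<And>x. bounded_linear (D x)"
    and unif: "\<And>R e. 0 < R \<Longrightarrow> 0 < e \<Longrightarrow>
      eventually (\<lambda>k. \<forall>x\<in>cball 0 R. onorm (\<lambda>v. Dk k x v - D x v) < e) sequentially"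
    and "pk \<longlonglongrightarrow> p" and cont: "(\<lambda>k. onorm (\<lambda>v. D (pk k) v - D p v)) \<longlonglongrightarrow> 0"
  shows "(\<lambda>k. onorm (\<lambda>v. Dk k (pk k) v - D p v)) \<longlonglongrightarrow> 0"
proof (rule Lim_null_comparison)
  define e where "e k = onorm (\<lambda>v. Dk k (pk k) v - D (pk k) v)" for k
  have bl: "bounded_linear (\<lambda>v. A v - B v)" if "bounded_linear A" "bounded_linear B" for A B
    using that by (rule bounded_linear_sub)
  show "\<forall>\<^sub>F k in sequentially. norm (onorm (\<lambda>v. Dk k (pk k) v - D p v))
      \<le> e k + onorm (\<lambda>v. D (pk k) v - D p v)"
  proof (rule always_eventually, rule allI)
    fix k
    have "onorm (\<lambda>v. Dk k (pk k) v - D p v)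
        = onorm (\<lambda>v. (Dk k (pk k) v - D (pk k) v) + (D (pk k) v - D p v))"
      by simp
    also have "\<dots> \<le> e k + onorm (\<lambda>v. D (pk k) v - D p v)"
      unfolding e_def by (intro onorm_triangle bl Dk D)
    finally show "norm (onorm (\<lambda>v. Dk k (pk k) v - D p v))
        \<le> e k + onorm (\<lambda>v. D (pk k) v - D p v)"
      using onorm_pos_le[OF bl[OF Dk D]] by simp
  qed
  have e_nonneg: "0 \<le> e k" for k
    unfolding e_def by (intro onorm_pos_le bl Dk D)
  have "e \<longlonglongrightarrow> 0"
  proof (rule tendstoI)
    fix \<epsilon> :: real assume "0 < \<epsilon>"
    have "q \<in> cball 0 (norm p + 1)" if "dist q p < 1" for q
      using norm_triangle_sub[of q p] that by (simp add: dist_norm)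
    then have near: "\<forall>\<^sub>F k in sequentially. pk k \<in> cball 0 (norm p + 1)"
      using \<open>pk \<longlonglongrightarrow> p\<close>[THEN tendstoD, of 1] by (simp add: eventually_mono)
    show "\<forall>\<^sub>F k in sequentially. dist (e k) 0 < \<epsilon>"
      using eventually_conj[OF near unif[OF add_nonneg_pos[OF norm_ge_zero zero_less_one] \<open>0 < \<epsilon>\<close>]]
      by (rule eventually_mono) (use e_nonneg in \<open>auto simp: e_def\<close>)
  qed
  then show "(\<lambda>k. e k + onorm (\<lambda>v. D (pk k) v - D p v)) \<longlonglongrightarrow> 0"
    using cont by (rule tendsto_add_zero)
qed

context holder_half_contraction
begin

lemma tendsto_onorm_deriv:
  assumes "0 < \<gamma>" "pk \<longlonglongrightarrow> p"
  shows "(\<lambda>k. onorm (\<lambda>v. D (pk k) v - D p v)) \<longlonglongrightarrow> 0"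
proof (rule Lim_null_comparison[OF always_eventually])
  show "(\<lambda>k. 1/2 * dist (pk k) p powr \<gamma>) \<longlonglongrightarrow> 0"
    using assms by (intro tendsto_mult_right_zero tendsto_zero_powrI)
      (auto simp: tendsto_dist_iff[symmetric])
  show "\<forall>k. norm (onorm (\<lambda>v. D (pk k) v - D p v)) \<le> 1/2 * dist (pk k) p powr \<gamma>"
    using onorm_deriv_diff_holder onorm_deriv_diff_nonneg by simp
qed

lemma tendsto_onorm_conj_shift_deriv:
  assumes "0 < \<gamma>"
    and hk: "\<And>k. half_contraction (fk k) (Dk k)"
    and lim: "\<And>x. (\<lambda>k. fk k x) \<longlonglongrightarrow> f x"
    and unif: "\<And>R e. 0 < R \<Longrightarrow> 0 < e \<Longrightarrow>
      eventually (\<lambda>k. \<forall>x\<in>cball 0 R. onorm (\<lambda>v. Dk k x v - D x v) < e) sequentially"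
  shows "(\<lambda>k. onorm (\<lambda>v. conj_shift_deriv (fk k) (Dk k) z y v - conj_shift_deriv f D z y v))
    \<longlonglongrightarrow> 0"
proof -
  have blk: "bounded_linear (Dk k x)" and onk: "onorm (Dk k x) \<le> 1/2" for k x
    using half_contraction.bounded_linear_deriv[OF hk] half_contraction.onorm_deriv_le[OF hk] by auto
  have x: "(\<lambda>k. inv (id_plus (fk k)) y) \<longlonglongrightarrow> inv (id_plus f) y"
    by (rule tendsto_inv_id_plus[OF half_contraction.lipschitz[OF hk] lipschitz lim])
  have deriv: "(\<lambda>k. onorm (\<lambda>v. Dk k (pk k) v - D p v)) \<longlonglongrightarrow> 0" if "pk \<longlonglongrightarrow> p" for pk p
    by (rule tendsto_onorm_locally_uniform[OF blk bounded_linear_deriv unif that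
          tendsto_onorm_deriv[OF \<open>0 < \<gamma>\<close> that]])
  show ?thesis
    unfolding conj_shift_deriv_def
    by (rule tendsto_onorm_conj_shift_op[OF blk blk onk bounded_linear_deriv bounded_linear_deriv
          onorm_deriv_le deriv deriv])
      (intro tendsto_add x tendsto_const, rule x)
qed

end

section \<open>Operator Hoelder norms and the standing assumptions\<close>

lemma eventually_forall_less_if_SUP_tendsto_zero:
  fixes F :: "nat \<Rightarrow> 'b \<Rightarrow> 'a \<Rightarrow> real"
  assumes lim: "(\<lambda>k. SUP t\<in>T. SUP x\<in>S. ereal (F k t x)) \<longlonglongrightarrow> 0" and "t \<in> T" "0 < e"
  shows "eventually (\<lambda>k. \<forall>x\<in>S. F k t x < e) sequentially"
proof -
  have "eventually (\<lambda>k. (SUP t\<in>T. SUP x\<in>S. ereal (F k t x)) < ereal e) sequentially"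
    using order_tendstoD(2)[OF lim] \<open>0 < e\<close> by (simp add: zero_ereal_def)
  then show ?thesis
  proof (rule eventually_mono, intro ballI)
    fix k x assume sup: "(SUP t\<in>T. SUP x\<in>S. ereal (F k t x)) < ereal e" and "x \<in> S"
    have "ereal (F k t x) \<le> (SUP t\<in>T. SUP x\<in>S. ereal (F k t x))"
      using \<open>t \<in> T\<close> \<open>x \<in> S\<close> by (intro SUP_upper2[OF \<open>t \<in> T\<close> SUP_upper])
    from le_less_trans[OF this sup] show "F k t x < e" by simp
  qed
qed

lemma hnorm_op_le:
  fixes D :: "'a::euclidean_space \<Rightarrow> 'a \<Rightarrow> 'a"
  assumes "\<And>x. onorm (D x) \<le> a"
    and "\<And>x x'. onorm (\<lambda>v. D x v - D x' v) \<le> b * dist x x' powr \<beta>"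
  shows "hnorm_op D \<beta> \<le> ereal (a + b)"
proof -
  have "sup_op D \<le> ereal a"
    unfolding sup_op_def using assms(1) by (intro SUP_least) simp
  moreover have "hoelder_op D \<beta> \<le> ereal b"
    unfolding hoelder_op_def
  proof (rule SUP_least)
    fix p :: "'a \<times> 'a" assume "p \<in> {p. fst p \<noteq> snd p}"
    then have "0 < dist (fst p) (snd p) powr \<beta>" by simp
    then show "ereal (onorm (\<lambda>v. D (fst p) v - D (snd p) v) / dist (fst p) (snd p) powr \<beta>) \<le> ereal b"
      using assms(2)[of "fst p" "snd p"] by (simp add: pos_divide_le_eq)
  qed
  ultimately show ?thesis
    unfolding hnorm_op_def by (metis add_mono plus_ereal.simps(1))
qed

lemma hnorm_op_leD:
  fixes D :: "'a::euclidean_space \<Rightarrow> 'a \<Rightarrow> 'a"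
  assumes bl: "\<And>x. bounded_linear (D x)" and le: "hnorm_op D \<beta> \<le> ereal c"
  shows "onorm (D x) \<le> c" and "onorm (\<lambda>v. D x v - D x' v) \<le> c * dist x x' powr \<beta>"
proof -
  have sup: "ereal (onorm (D x)) \<le> sup_op D" for x
    unfolding sup_op_def by (rule SUP_upper) simp
  have hoelder: "ereal (onorm (\<lambda>v. D x v - D x' v) / dist x x' powr \<beta>) \<le> hoelder_op D \<beta>"
    if "x \<noteq> x'" for x x'
    unfolding hoelder_op_def using that by (intro SUP_upper2[where i = "(x, x')"]) auto
  have "0 \<le> sup_op D"
    using sup[of 0] onorm_pos_le[OF bl, of 0] by (simp add: order_trans[OF _ sup[of 0]])
  obtain b :: 'a where "b \<noteq> 0"
    using nonempty_Basis nonzero_Basis by blast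
  then have "0 \<le> hoelder_op D \<beta>"
    using hoelder[of b 0] onorm_pos_le[OF bounded_linear_sub[OF bl bl], of b 0]
    by (simp add: order_trans[OF _ hoelder[of b 0]])
  have "sup_op D \<le> hnorm_op D \<beta>"
    unfolding hnorm_op_def by (rule add_increasing2[OF \<open>0 \<le> hoelder_op D \<beta>\<close> order_refl])
  moreover have "hoelder_op D \<beta> \<le> hnorm_op D \<beta>"
    unfolding hnorm_op_def by (rule add_increasing[OF \<open>0 \<le> sup_op D\<close> order_refl])
  ultimately have sup_le: "sup_op D \<le> ereal c" and hoelder_le: "hoelder_op D \<beta> \<le> ereal c"
    using le by (auto intro: order_trans)
  show "onorm (D x) \<le> c"
    using order_trans[OF sup[of x] sup_le] by simp
  show "onorm (\<lambda>v. D x v - D x' v) \<le> c * dist x x' powr \<beta>"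
  proof (cases "x = x'")
    case True
    then show ?thesis by (simp add: onorm_zero)
  next
    case False
    then have "onorm (\<lambda>v. D x v - D x' v) / dist x x' powr \<beta> \<le> c"
      using order_trans[OF hoelder[OF False] hoelder_le] by simp
    then show ?thesis
      using False by (simp add: pos_divide_le_eq)
  qed
qed

lemma setting_imp_holder_half_contraction:
  fixes u :: "enat \<Rightarrow> real \<Rightarrow> 'a::euclidean_space \<Rightarrow> 'a"
  assumes "setting \<gamma> u" "t \<in> {0..1}"
  shows "holder_half_contraction (u n t) (grad (u n t)) \<gamma>"
proof -
  have der: "(u n t has_derivative grad (u n t) x) (at x)" for x
    using assms unfolding setting_def grad_def by (simp add: frechet_derivative_works[symmetric])
  have bl: "bounded_linear (grad (u n t) x)" for x
    using der has_derivative_bounded_linear by blast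
  have "hnorm_op (grad (u n t)) \<gamma> \<le> ereal (1/2)"
    using assms unfolding setting_def by blast
  from hnorm_op_leD[OF bl this] der show ?thesis
    by unfold_locales auto
qed

lemma setting_imp_half_contraction:
  fixes u :: "enat \<Rightarrow> real \<Rightarrow> 'a::euclidean_space \<Rightarrow> 'a"
  assumes "setting \<gamma> u" "t \<in> {0..1}"
  shows "half_contraction (u n t) (grad (u n t))"
  using setting_imp_holder_half_contraction[OF assms] by (rule holder_half_contraction.axioms(1))

lemma setting_tendsto:
  fixes u :: "enat \<Rightarrow> real \<Rightarrow> 'a::euclidean_space \<Rightarrow> 'a"
  assumes "setting \<gamma> u" "t \<in> {0..1}"
  shows "(\<lambda>k. u (enat k) t x) \<longlonglongrightarrow> u \<infinity> t x"
    and "\<And>R e. 0 < R \<Longrightarrow> 0 < e \<Longrightarrow> eventually (\<lambda>k. \<forall>x\<in>cball 0 R.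
      onorm (\<lambda>v. grad (u (enat k) t) x v - grad (u \<infinity> t) x v) < e) sequentially"
proof -
  show unif: "eventually (\<lambda>k. \<forall>x\<in>cball 0 R.
      onorm (\<lambda>v. grad (u (enat k) t) x v - grad (u \<infinity> t) x v) < e) sequentially"
    if "0 < R" "0 < e" for R e
  proof -
    have "(\<lambda>k. SUP t\<in>{0..1}. SUP x\<in>cball 0 R.
        ereal (onorm (\<lambda>v. grad (u (enat k) t) x v - grad (u \<infinity> t) x v))) \<longlonglongrightarrow> 0"
      using assms(1) \<open>0 < R\<close> unfolding setting_def by blast
    then show ?thesis
      by (rule eventually_forall_less_if_SUP_tendsto_zero[OF _ assms(2) \<open>0 < e\<close>])
  qed
  show "(\<lambda>k. u (enat k) t x) \<longlonglongrightarrow> u \<infinity> t x"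
  proof (rule tendstoI)
    fix e :: real assume "0 < e"
    have "0 < norm x + 1" by (simp add: add_nonneg_pos)
    then have "(\<lambda>k. SUP t\<in>{0..1}. SUP x'\<in>cball 0 (norm x + 1).
        ereal (norm (u (enat k) t x' - u \<infinity> t x'))) \<longlonglongrightarrow> 0"
      using assms(1) unfolding setting_def by blast
    then have "eventually (\<lambda>k. \<forall>x'\<in>cball 0 (norm x + 1). norm (u (enat k) t x' - u \<infinity> t x') < e)
        sequentially"
      by (rule eventually_forall_less_if_SUP_tendsto_zero[OF _ assms(2) \<open>0 < e\<close>])
    then show "\<forall>\<^sub>F k in sequentially. dist (u (enat k) t x) (u \<infinity> t x) < e"
      by (rule eventually_mono) (simp add: dist_norm)
  qed
qed

lemma gfun_eq_conj_shift: "gfun u n s y z = conj_shift (u n s) z y"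
proof -
  have "Phi u n s = id_plus (u n s)"
    by (simp add: fun_eq_iff Phi_def id_plus_def)
  then show ?thesis
    by (simp add: gfun_def conj_shift_def)
qed

lemma grad_conj_shift:
  fixes f :: "'a::euclidean_space \<Rightarrow> 'a"
  assumes "half_contraction f D"
  shows "grad (conj_shift f z) = conj_shift_deriv f D z"
  by (rule ext) (simp add: grad_def frechet_derivative_at[OF half_contraction.has_derivative_conj_shift[OF assms], symmetric])

lemma hnorm_op_grad_gfun_le:
  fixes u :: "enat \<Rightarrow> real \<Rightarrow> 'a::euclidean_space \<Rightarrow> 'a"
  assumes "setting \<gamma> u" "s \<in> {0..1}"
    and "0 \<le> \<gamma>1" "\<gamma>1 \<le> 1" "0 \<le> \<gamma>2" "\<gamma>1 + \<gamma>2 = \<gamma>"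
  shows "hnorm_op (grad (\<lambda>y. gfun u n s y z)) \<gamma>1 \<le> ereal (18 * min 1 (mpow (norm z) \<gamma>2))"
proof -
  interpret holder_half_contraction "u n s" "grad (u n s)" \<gamma>
    by (rule setting_imp_holder_half_contraction[OF assms(1,2)])
  have "hnorm_op (conj_shift_deriv (u n s) (grad (u n s)) z) \<gamma>1
      \<le> ereal (2 * min 1 (mpow (norm z) \<gamma>2) + 16 * min 1 (mpow (norm z) \<gamma>2))"
  proof (rule hnorm_op_le)
    show "onorm (conj_shift_deriv (u n s) (grad (u n s)) z y) \<le> 2 * min 1 (mpow (norm z) \<gamma>2)" for y
      by (rule onorm_conj_shift_deriv_le) (use assms in auto)
    show "onorm (\<lambda>v. conj_shift_deriv (u n s) (grad (u n s)) z y v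
        - conj_shift_deriv (u n s) (grad (u n s)) z y' v)
        \<le> 16 * min 1 (mpow (norm z) \<gamma>2) * dist y y' powr \<gamma>1" for y y'
      by (rule onorm_conj_shift_deriv_diff_le) (use assms in auto)
  qed
  then show ?thesis
    by (simp add: gfun_eq_conj_shift grad_conj_shift[OF half_contraction_axioms])
qed

lemma tendsto_gfun:
  fixes u :: "enat \<Rightarrow> real \<Rightarrow> 'a::euclidean_space \<Rightarrow> 'a"
  assumes "setting \<gamma> u" "0 < \<gamma>" "t \<in> {0..1}"
  shows "(\<lambda>k. gfun u (enat k) t y z) \<longlonglongrightarrow> gfun u \<infinity> t y z"
    and "(\<lambda>k. onorm (\<lambda>v. grad (\<lambda>y. gfun u (enat k) t y z) y v - grad (\<lambda>y. gfun u \<infinity> t y z) y v))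
      \<longlonglongrightarrow> 0"
proof -
  interpret holder_half_contraction "u \<infinity> t" "grad (u \<infinity> t)" \<gamma>
    by (rule setting_imp_holder_half_contraction[OF assms(1,3)])
  note hk = setting_imp_half_contraction[OF assms(1,3), of "enat k" for k]
  show "(\<lambda>k. gfun u (enat k) t y z) \<longlonglongrightarrow> gfun u \<infinity> t y z"
    unfolding gfun_eq_conj_shift
    by (rule tendsto_conj_shift[OF half_contraction.lipschitz[OF hk] lipschitz
          setting_tendsto(1)[OF assms(1,3)]])
  show "(\<lambda>k. onorm (\<lambda>v. grad (\<lambda>y. gfun u (enat k) t y z) y v - grad (\<lambda>y. gfun u \<infinity> t y z) y v))
      \<longlonglongrightarrow> 0"
    unfolding gfun_eq_conj_shift grad_conj_shift[OF hk] grad_conj_shift[OF half_contraction_axioms]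
    by (rule tendsto_onorm_conj_shift_deriv[OF assms(2) hk setting_tendsto[OF assms(1,3)]])
qed

theorem lemma3p2:
  fixes \<gamma> \<gamma>1 \<gamma>2 :: real
  assumes "0 < \<gamma>" "\<gamma> < 1" "\<gamma>1 \<ge> 0" "\<gamma>2 \<ge> 0" "\<gamma>1 + \<gamma>2 = \<gamma>"
  shows "(\<exists>C1>0. \<forall>u :: enat \<Rightarrow> real \<Rightarrow> 'a::euclidean_space \<Rightarrow> 'a. setting \<gamma> u \<longrightarrow>
            (\<forall>n z. (\<forall>s\<in>{0..1}. \<forall>y. (\<lambda>y. gfun u n s y z) differentiable (at y)) \<and>
                   (SUP s\<in>{0..1}. hnorm_op (grad (\<lambda>y. gfun u n s y z)) \<gamma>1)
                      \<le> ereal (C1 * min 1 (mpow (norm z) \<gamma>2))) \<and>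
            (\<forall>n s y z. s \<in> {0..1} \<longrightarrow> norm (gfun u n s y z) \<le> 3/2 * norm z))
       \<and> (\<forall>u :: enat \<Rightarrow> real \<Rightarrow> 'a \<Rightarrow> 'a. setting \<gamma> u \<longrightarrow>
            (\<forall>t\<in>{0..1}. \<forall>y z.
               (\<lambda>k::nat. gfun u (enat k) t y z) \<longlonglongrightarrow> gfun u \<infinity> t y z \<and>
               (\<lambda>k::nat. onorm (\<lambda>v. grad (\<lambda>y. gfun u (enat k) t y z) y v
                                     - grad (\<lambda>y. gfun u \<infinity> t y z) y v)) \<longlonglongrightarrow> 0))"
proof (intro conjI exI[of _ 18] allI impI ballI)
  fix u :: "enat \<Rightarrow> real \<Rightarrow> 'a \<Rightarrow> 'a" and n z
  assume u: "setting \<gamma> u"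
  show "(\<lambda>y. gfun u n s y z) differentiable (at y)" if "s \<in> {0..1}" for s y
    using half_contraction.has_derivative_conj_shift[OF setting_imp_half_contraction[OF u that]]
    unfolding gfun_eq_conj_shift by (rule differentiableI)
  show "(SUP s\<in>{0..1}. hnorm_op (grad (\<lambda>y. gfun u n s y z)) \<gamma>1)
      \<le> ereal (18 * min 1 (mpow (norm z) \<gamma>2))"
    using assms by (intro SUP_least hnorm_op_grad_gfun_le[OF u]) auto
next
  fix u :: "enat \<Rightarrow> real \<Rightarrow> 'a \<Rightarrow> 'a" and n and s :: real and y z
  assume "setting \<gamma> u" "s \<in> {0..1}"
  from half_contraction.lipschitz[OF setting_imp_half_contraction[OF this]]
  show "norm (gfun u n s y z) \<le> 3/2 * norm z"
    unfolding gfun_eq_conj_shift by (rule norm_conj_shift_le)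
qed (simp_all add: tendsto_gfun \<open>0 < \<gamma>\<close>)

end
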